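(* Let $s\in\mathbb{N}$, $0<\alpha\le 1$, $1\le p\le\infty$, and let $f\in K_{\alpha,p}$. Then for every $L\in\mathbb{N}$, $$\Big|\sum_{\boldsymbol{k}\in\mathbb{Z}^s\setminus\{\boldsymbol{0}\}}\widetilde f(L\boldsymbol{k})\Big|\le \frac{s^{\alpha/p}}{L^\alpha}\,|f|_{H_{\alpha,p}}.$$
   Context: Convention: $s^{\alpha/p}=1$ when $p=\infty$. For $\boldsymbol{k},\boldsymbol{x}\in\mathbb{R}^s$, $\boldsymbol{k}\cdot\boldsymbol{x}=\sum_{j=1}^s k_jx_j$. For $f\in L^2([0,1]^s)$ the Fourier coefficients are $\widetilde f(\boldsymbol{k})=\int_{[0,1]^s}f(\boldsymbol{x})e^{-2\pi i\boldsymbol{k}\cdot\boldsymbol{x}}\,d\boldsymbol{x}$, $\boldsymbol{k}\in\mathbb{Z}^s$. For $0<\alpha\le1$, $1\le p\le\infty$, the Hölder seminorm is $|f|_{H_{\alpha,p}}=\sup\{|f(\boldsymbol{x}+\boldsymbol{h})-f(\boldsymbol{x})|/\|\boldsymbol{h}\|_{\ell^p}^\alpha:\ \boldsymbol{h}\neq\boldsymbol{0},\ \boldsymbol{x},\boldsymbol{x}+\boldsymbol{h}\in[0,1)^s\}$. A function $f:[0,1]^s\to\mathbb{R}$ is one-periodic if $f(\boldsymbol{x}_u,\boldsymbol{0})=f(\boldsymbol{x}_u,\boldsymbol{1})$ for all $u\subseteq\{1,\dots,s\}$ and $\boldsymbol{x}_u\in[0,1]^u$, where $(\boldsymbol{x}_u,\boldsymbol{0})$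 (resp. $(\boldsymbol{x}_u,\boldsymbol{1})$) has $j$th coordinate $x_j$ for $j\in u$ and $0$ (resp. $1$) otherwise. The space $K_{\alpha,p}$ consists of all one-periodic $f\in L^2([0,1]^s)$, $f:[0,1]^s\to\mathbb{R}$, with finite norm $\|f\|_{K_{\alpha,p}}=\sum_{\boldsymbol{k}\in\mathbb{Z}^s}|\widetilde f(\boldsymbol{k})|+|f|_{H_{\alpha,p}}$. *)

theory Defs
  imports "HOL-Analysis.Analysis" "HOL-Library.Extended_Real"
begin

text \<open>Points of [0,1]^s are vectors of type real^'s; the dimension s is CARD('s).
  The exponent p ranges over [1,\<infinity>] and is modelled as an extended real.\<close>

definition kdot :: "int ^ 's \<Rightarrow> real ^ 's \<Rightarrow> real" where
  "kdot k x = (\<Sum>j\<in>UNIV. of_int (k $ j) * x $ j)"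

definition fourier_coeff :: "(real ^ 's \<Rightarrow> real) \<Rightarrow> int ^ 's \<Rightarrow> complex" where
  "fourier_coeff f k = integral (cbox 0 1)
     (\<lambda>x. complex_of_real (f x) * exp (- (2 * of_real pi * \<i> * complex_of_real (kdot k x))))"

definition lp_norm :: "ereal \<Rightarrow> real ^ 's \<Rightarrow> real" where
  "lp_norm p h = (if p = \<infinity> then Max (range (\<lambda>j. \<bar>h $ j\<bar>))
                  else (\<Sum>j\<in>UNIV. \<bar>h $ j\<bar> powr real_of_ereal p) powr (1 / real_of_ereal p))"

definition halfopen_cube :: "(real ^ 's) set" where
  "halfopen_cube = {x. \<forall>j. 0 \<le> x $ j \<and> x $ j < 1}"

definition holder_quotients :: "real \<Rightarrow> ereal \<Rightarrow> (real ^ 's \<Rightarrow> real) \<Rightarrow> real set" where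
  "holder_quotients \<alpha> p f =
     {\<bar>f (x + h) - f x\<bar> / (lp_norm p h) powr \<alpha> | x h.
        h \<noteq> 0 \<and> x \<in> halfopen_cube \<and> x + h \<in> halfopen_cube}"

definition holder_seminorm :: "real \<Rightarrow> ereal \<Rightarrow> (real ^ 's \<Rightarrow> real) \<Rightarrow> real" where
  "holder_seminorm \<alpha> p f = Sup (holder_quotients \<alpha> p f)"

definition one_periodic :: "(real ^ 's \<Rightarrow> real) \<Rightarrow> bool" where
  "one_periodic f \<longleftrightarrow>
     (\<forall>u x. x \<in> cbox 0 1 \<longrightarrow>
        f (\<chi> j. if j \<in> u then x $ j else 0) = f (\<chi> j. if j \<in> u then x $ j else 1))"

definition square_integrable_on_cube :: "(real ^ 's \<Rightarrow> real) \<Rightarrow> bool" where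
  "square_integrable_on_cube f \<longleftrightarrow>
     f measurable_on cbox 0 1 \<and> (\<lambda>x. (f x)\<^sup>2) integrable_on cbox 0 1"

definition K_space :: "real \<Rightarrow> ereal \<Rightarrow> (real ^ 's \<Rightarrow> real) set" where
  "K_space \<alpha> p = {f. one_periodic f \<and> square_integrable_on_cube f
      \<and> (\<lambda>k. norm (fourier_coeff f k)) summable_on UNIV
      \<and> bdd_above (holder_quotients \<alpha> p f)}"

definition dim_factor :: "real \<Rightarrow> ereal \<Rightarrow> 's itself \<Rightarrow> real" where
  "dim_factor \<alpha> p _ = (if p = \<infinity> then 1 else real CARD('s) powr (\<alpha> / real_of_ereal p))"

end

theory Submission
  imports Defs
begin

(* Let K_n(x) = |sum_{m in {0..n}^s} e(L m.x)|^2 / (n+1)^s. This Fejer-type kernel is nonnegative,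
   has integral 1 and is invariant under translation by the grid (1/L)Z^s. Hence the integral of
   f K_n - f splits over the L^s cells of side 1/L, and on each cell it is bounded by the
   oscillation of f there, which the Hoelder condition bounds by s^(alpha/p) L^(-alpha) |f|_H.
   Expanding the square, the integral of f K_n is sum_k w_n(k) f^(L k) with Fejer weights
   w_n(k) = prod_j (1 - |k_j|/(n+1))_+ in [0,1] tending to 1, so absolute summability of the
   Fourier coefficients lets n tend to infinity, and f^(0) is the integral of f. *)

section \<open>Grid cells of the unit cube\<close>

definition grid :: "nat \<Rightarrow> ('s::finite \<Rightarrow> nat) set" where
  "grid N = PiE UNIV (\<lambda>_. {..<N})"

definition grid_point :: "nat \<Rightarrow> ('s::finite \<Rightarrow> nat) \<Rightarrow> real^'s" where
  "grid_point N a = (\<chi> j. real (a j) / real N)"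

definition cell_corner :: "nat \<Rightarrow> real^'s::finite" where
  "cell_corner N = (\<chi> j. 1 / real N)"

definition cell :: "nat \<Rightarrow> ('s::finite \<Rightarrow> nat) \<Rightarrow> (real^'s) set" where
  "cell N a = cbox (grid_point N a) (grid_point N a + cell_corner N)"

lemma finite_grid: "finite (grid N)"
  unfolding grid_def by (intro finite_PiE) auto

lemma mem_grid_iff: "a \<in> grid N \<longleftrightarrow> (\<forall>j. a j < N)"
  unfolding grid_def by (auto simp: PiE_iff)

lemma mem_cell_iff:
  "x \<in> cell N a \<longleftrightarrow> (\<forall>j. real (a j) / N \<le> x $ j \<and> x $ j \<le> (real (a j) + 1) / N)"
  by (auto simp: cell_def mem_box_cart grid_point_def cell_corner_def add_divide_distrib)

lemma grid_point_in_cell: "N \<ge> 1 \<Longrightarrow> grid_point N a \<in> cell N a"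
  by (auto simp: cell_def cell_corner_def grid_point_def mem_box_cart)

lemma cell_subset_cube:
  assumes "N \<ge> 1" and "a \<in> grid N"
  shows "cell N a \<subseteq> cbox 0 1"
proof
  fix x assume "x \<in> cell N a"
  moreover have "(real (a j) + 1) / real N \<le> 1" for j
  proof -
    have "a j + 1 \<le> N" using assms(2) by (simp add: mem_grid_iff Suc_le_eq)
    then show ?thesis using assms(1) by (simp add: divide_le_eq_1)
  qed
  ultimately show "x \<in> cbox 0 1"
    unfolding mem_cell_iff mem_box_cart zero_index one_index by (meson divide_nonneg_nonneg of_nat_0_le_iff order_trans)
qed

lemma interior_cells_disjoint:
  assumes "N \<ge> 1" and "a \<noteq> b"
  shows "interior (cell N a) \<inter> interior (cell N b) = {}"
proof (rule ccontr)
  obtain j where j: "a j \<noteq> b j" using assms(2) by auto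
  assume "interior (cell N a) \<inter> interior (cell N b) \<noteq> {}"
  then obtain x where "x \<in> interior (cell N a)" "x \<in> interior (cell N b)" by blast
  then have "real (a j) / N < x $ j" "x $ j < (real (a j) + 1) / N"
    "real (b j) / N < x $ j" "x $ j < (real (b j) + 1) / N"
    by (auto simp: cell_def mem_box_cart grid_point_def cell_corner_def add_divide_distrib)
  then have "real (a j) / N < (real (b j) + 1) / N" "real (b j) / N < (real (a j) + 1) / N"
    by linarith+
  then have "real (a j) < real (b j) + 1" "real (b j) < real (a j) + 1"
    using assms(1) by (simp_all add: divide_less_cancel)
  then show False using j by linarith
qed

lemma cube_subset_Union_cells:
  assumes N: "N \<ge> 1"
  shows "cbox 0 1 \<subseteq> \<Union> (cell N ` grid N)"
proof
  fix x :: "real^'s" assume x: "x \<in> cbox 0 1"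
  define a where "a = (\<lambda>j. min (N - 1) (nat \<lfloor>real N * x $ j\<rfloor>))"
  have "x \<in> cell N a"
    unfolding mem_cell_iff
  proof
    fix j
    have x01: "0 \<le> x $ j" "x $ j \<le> 1" using x by (auto simp: mem_box_cart)
    have Npos: "real N > 0" using N by simp
    show "real (a j) / N \<le> x $ j \<and> x $ j \<le> (real (a j) + 1) / N"
    proof (cases "nat \<lfloor>real N * x $ j\<rfloor> \<le> N - 1")
      case True
      then have "real (a j) = of_int \<lfloor>real N * x $ j\<rfloor>"
        using x01 by (simp add: a_def min_def)
      moreover have "of_int \<lfloor>real N * x $ j\<rfloor> \<le> real N * x $ j"
        "real N * x $ j < of_int \<lfloor>real N * x $ j\<rfloor> + 1" by linarith+
      ultimately show ?thesis using Npos by (auto simp: field_simps)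
    next
      case False
      then have "real N * x $ j \<ge> real N" by linarith
      then have "x $ j = 1" using x01 Npos by (simp add: mult_le_cancel_left1)
      moreover have "real (a j) = real N - 1" using False N by (simp add: a_def of_nat_diff)
      ultimately show ?thesis using Npos by (auto simp: field_simps)
    qed
  qed
  moreover have "a \<in> grid N" using N by (auto simp: a_def mem_grid_iff)
  ultimately show "x \<in> \<Union> (cell N ` grid N)" by blast
qed

lemma cells_division_of_cube:
  assumes "N \<ge> 1"
  shows "cell N ` grid N division_of cbox (0::real^'s::finite) 1"
proof (rule division_ofI)
  show "finite (cell N ` (grid N :: ('s \<Rightarrow> nat) set))" using finite_grid by blast
  show "\<Union> (cell N ` grid N) = (cbox 0 1 :: (real^'s) set)"
    using cell_subset_cube[OF assms] cube_subset_Union_cells[OF assms] by (intro subset_antisym) auto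
  fix K :: "(real^'s) set" assume "K \<in> cell N ` grid N"
  then obtain a where a: "a \<in> grid N" and K: "K = cell N a" by blast
  show "K \<subseteq> cbox 0 1" using cell_subset_cube[OF assms a] K by simp
  show "K \<noteq> {}" using grid_point_in_cell[OF assms, of a] K by blast
  show "\<exists>a b. K = cbox a b" unfolding K cell_def by blast
  fix K' assume "K' \<in> cell N ` grid N" "K \<noteq> K'"
  then obtain b where "K' = cell N b" "a \<noteq> b" using K by blast
  then show "interior K \<inter> interior K' = {}"
    using K interior_cells_disjoint[OF assms] by simp
qed

lemma inj_on_cell:
  assumes "N \<ge> 1"
  shows "inj_on (cell N) (grid N :: ('s::finite \<Rightarrow> nat) set)"
proof (rule inj_onI)
  fix a b :: "'s \<Rightarrow> nat"
  assume "cell N a = cell N b"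
  moreover have "cell N a \<noteq> {}" using grid_point_in_cell[OF assms, of a] by blast
  ultimately have "grid_point N a = grid_point N b"
    unfolding cell_def by (simp add: eq_cbox)
  then show "a = b"
    using assms by (auto simp: grid_point_def vec_eq_iff fun_eq_iff)
qed

lemma integrable_on_cell_shifted:
  fixes g :: "real^'s::finite \<Rightarrow> 'b::banach"
  assumes "N \<ge> 1" and "g integrable_on cbox 0 1" and "a \<in> grid N"
  shows "(\<lambda>y. g (grid_point N a + y)) integrable_on cbox 0 (cell_corner N)"
proof -
  have "g integrable_on cell N a"
    using integrable_on_subcbox[OF assms(2)] cell_subset_cube[OF assms(1,3)] by (simp add: cell_def)
  then show ?thesis
    using integrable_on_shift_cbox[of g "grid_point N a" 0 "cell_corner N"]
    by (simp add: cell_def o_def add.commute)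
qed

lemma integral_cube_eq_sum_cells:
  fixes g :: "real^'s::finite \<Rightarrow> 'b::banach"
  assumes N: "N \<ge> 1" and g: "g integrable_on cbox 0 1"
  shows "integral (cbox 0 1) g
           = (\<Sum>a\<in>grid N. integral (cbox 0 (cell_corner N)) (\<lambda>y. g (grid_point N a + y)))"
proof -
  have "integral (cbox 0 1) g = (\<Sum>K\<in>cell N ` grid N. integral K g)"
    by (rule integral_combine_division_topdown[OF g cells_division_of_cube[OF N]])
  also have "\<dots> = (\<Sum>a\<in>grid N. integral (cell N a) g)"
    by (rule sum.reindex[OF inj_on_cell[OF N], unfolded o_def])
  also have "\<dots> = (\<Sum>a\<in>grid N. integral (cbox 0 (cell_corner N)) (\<lambda>y. g (grid_point N a + y)))"
  proof (rule sum.cong[OF refl])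
    fix a :: "'s \<Rightarrow> nat" assume "a \<in> grid N"
    then have "((\<lambda>y. g (grid_point N a + y)) has_integral
                 integral (cbox 0 (cell_corner N)) (\<lambda>y. g (grid_point N a + y))) (cbox 0 (cell_corner N))"
      using integrable_on_cell_shifted[OF N g] by blast
    then have "(g has_integral integral (cbox 0 (cell_corner N)) (\<lambda>y. g (grid_point N a + y))) (cell N a)"
      using has_integral_shift_cbox_iff[of g "grid_point N a" _ 0 "cell_corner N"]
      by (simp add: cell_def o_def add.commute)
    then show "integral (cell N a) g = integral (cbox 0 (cell_corner N)) (\<lambda>y. g (grid_point N a + y))"
      by (rule integral_unique)
  qed
  finally show ?thesis .
qed

section \<open>Characters\<close>

definition character :: "int^'s::finite \<Rightarrow> real^'s \<Rightarrow> complex" where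
  "character k x = exp (2 * of_real pi * \<i> * complex_of_real (kdot k x))"

lemma kdot_minus_left: "kdot (- k) x = - kdot k x"
  by (simp add: kdot_def sum_negf)

lemma kdot_diff_left: "kdot (k - l) x = kdot k x - kdot l x"
  by (simp add: kdot_def left_diff_distrib sum_subtractf)

lemma kdot_add_right: "kdot k (x + y) = kdot k x + kdot k y"
  by (simp add: kdot_def distrib_left sum.distrib)

lemma kdot_eq_if_eq_except:
  assumes "\<And>i. i \<noteq> j \<Longrightarrow> y $ i = x $ i"
  shows "kdot k y = kdot k x + of_int (k $ j) * (y $ j - x $ j)"
proof -
  have "kdot k y - kdot k x = (\<Sum>i\<in>UNIV. of_int (k $ i) * (y $ i - x $ i))"
    by (simp add: kdot_def right_diff_distrib sum_subtractf)
  also have "\<dots> = (\<Sum>i\<in>UNIV. if i = j then of_int (k $ j) * (y $ j - x $ j) else 0)"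
    by (rule sum.cong) (auto simp: assms)
  finally show ?thesis by simp
qed

lemma exp_2pi_i_eq_1_iff: "exp (2 * of_real pi * \<i> * complex_of_real t) = 1 \<longleftrightarrow> t \<in> \<int>"
proof -
  have "exp (2 * of_real pi * \<i> * complex_of_real t) = 1 \<longleftrightarrow> (\<exists>n::int. 2 * pi * t = of_int (2 * n) * pi)"
    by (simp add: exp_eq_1)
  also have "\<dots> \<longleftrightarrow> (\<exists>n::int. t = of_int n)"
    by (auto simp: algebra_simps)
  finally show ?thesis by (auto elim: Ints_cases)
qed

lemma character_eq_1_iff: "character k x = 1 \<longleftrightarrow> kdot k x \<in> \<int>"
  by (simp add: character_def exp_2pi_i_eq_1_iff)

lemma character_add_right: "character k (x + y) = character k x * character k y"
  by (simp add: character_def kdot_add_right distrib_left exp_add)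

lemma character_diff_left: "character (k - l) x = character k x * cnj (character l x)"
  by (simp add: character_def kdot_diff_left exp_cnj right_diff_distrib exp_diff exp_minus field_simps)

lemma character_eq_mult:
  assumes "kdot k y - kdot k x - t \<in> \<int>"
  shows "character k y = character k x * exp (2 * of_real pi * \<i> * complex_of_real t)"
proof -
  obtain n :: int where n: "kdot k y = kdot k x + t + of_int n"
    using assms by (auto elim!: Ints_cases simp: algebra_simps)
  have "character k y = exp (2 * of_real pi * \<i> * complex_of_real (kdot k x)
          + 2 * of_real pi * \<i> * complex_of_real t + \<i> * (of_int n * (of_real pi * 2)))"
    unfolding character_def n by (simp add: algebra_simps)
  then show ?thesis by (simp only: exp_add character_def exp_2pi_1_int mult_1_right)
qed

lemma continuous_on_character: "continuous_on S (character k)"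
  unfolding character_def kdot_def by (intro continuous_intros)

lemma fourier_coeff_eq_integral_character:
  "fourier_coeff f k = integral (cbox 0 1) (\<lambda>x. complex_of_real (f x) * character (- k) x)"
  by (simp add: fourier_coeff_def character_def kdot_minus_left)

definition grid_step :: "'s \<Rightarrow> nat \<Rightarrow> ('s \<Rightarrow> nat) \<Rightarrow> ('s \<Rightarrow> nat)" where
  "grid_step j N a = a(j := (a j + 1) mod N)"

lemma bij_betw_grid_step:
  assumes "N \<ge> 1"
  shows "bij_betw (grid_step j N) (grid N) (grid N)"
proof -
  have "inj_on (grid_step j N) (grid N)"
  proof (rule inj_onI)
    fix a b assume "a \<in> grid N" "b \<in> grid N" and eq: "grid_step j N a = grid_step j N b"
    then have "a j < N" "b j < N" "(a j + 1) mod N = (b j + 1) mod N"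
      by (auto simp: mem_grid_iff grid_step_def dest: fun_cong[where x = j])
    moreover have "\<And>t. t < N \<Longrightarrow> (t + 1) mod N = (if t + 1 = N then 0 else t + 1)"
      by auto
    ultimately have "a j = b j" by (auto split: if_splits)
    with eq show "a = b"
      by (auto simp: grid_step_def fun_eq_iff split: if_splits)
  qed
  moreover have "grid_step j N ` grid N \<subseteq> grid N"
    using assms by (auto simp: grid_step_def mem_grid_iff)
  ultimately show ?thesis
    by (simp add: bij_betw_def endo_inj_surj finite_grid)
qed

lemma character_grid_step:
  assumes "N \<ge> 1" and "a \<in> grid N"
  shows "character d (grid_point N (grid_step j N a))
           = character d (grid_point N a) * exp (2 * of_real pi * \<i> * complex_of_real (real_of_int (d $ j) / real N))"
proof (rule character_eq_mult)
  define D where "D = real ((a j + 1) mod N) - real (a j)"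
  have "kdot d (grid_point N (grid_step j N a)) - kdot d (grid_point N a)
          = of_int (d $ j) * (D / real N)"
    unfolding D_def by (subst kdot_eq_if_eq_except[where j = j and x = "grid_point N a"])
       (auto simp: grid_point_def grid_step_def diff_divide_distrib)
  then have "kdot d (grid_point N (grid_step j N a)) - kdot d (grid_point N a)
               - real_of_int (d $ j) / real N = of_int (d $ j) * ((D - 1) / real N)"
    by (simp add: diff_divide_distrib right_diff_distrib)
  moreover have "a j < N" using assms(2) by (simp add: mem_grid_iff)
  then have "D - 1 = 0 \<or> D - 1 = - real N"
  proof (cases "a j + 1 < N")
    case False
    with \<open>a j < N\<close> have "a j + 1 = N" by simp
    then have "(a j + 1) mod N = 0" "real (a j) = real N - 1" by auto
    then show ?thesis by (simp add: D_def)
  qed (simp add: D_def)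
  ultimately show "kdot d (grid_point N (grid_step j N a)) - kdot d (grid_point N a)
                    - real_of_int (d $ j) / real N \<in> \<int>"
    using assms(1) by auto
qed

lemma sum_grid_character_eq_0:
  assumes "d $ j \<noteq> 0" and N: "\<bar>d $ j\<bar> < int N"
  shows "(\<Sum>a\<in>grid N. character d (grid_point N a)) = 0"
proof -
  define \<zeta> where "\<zeta> = exp (2 * of_real pi * \<i> * complex_of_real (real_of_int (d $ j) / real N))"
  define S where "S = (\<Sum>a\<in>grid N. character d (grid_point N a))"
  have N1: "N \<ge> 1" using N by linarith
  \<comment> \<open>a cyclic shift of the grid in direction j multiplies the sum by the root of unity \<zeta> \<noteq> 1\<close>
  have "S = (\<Sum>a\<in>grid N. character d (grid_point N (grid_step j N a)))"
    unfolding S_def by (rule sum.reindex_bij_betw[OF bij_betw_grid_step[OF N1], symmetric])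
  also have "\<dots> = S * \<zeta>"
    by (simp add: S_def \<zeta>_def character_grid_step[OF N1] sum_distrib_right)
  finally have "S * (\<zeta> - 1) = 0" by (simp add: algebra_simps)
  moreover have "\<zeta> \<noteq> 1"
  proof
    assume "\<zeta> = 1"
    then obtain n :: int where "real_of_int (d $ j) / real N = of_int n"
      unfolding \<zeta>_def exp_2pi_i_eq_1_iff by (auto elim: Ints_cases)
    then have "real_of_int (d $ j) = real_of_int (n * int N)" using N1 by (simp add: field_simps)
    then have "d $ j = n * int N" by (simp only: of_int_eq_iff)
    moreover have "n \<noteq> 0" using assms(1) \<open>d $ j = n * int N\<close> by auto
    ultimately have "\<bar>d $ j\<bar> \<ge> 1 * int N"
      by (simp only: abs_mult abs_of_nat) (intro mult_right_mono, linarith, simp)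
    with N show False by simp
  qed
  ultimately show ?thesis by (simp add: S_def)
qed

lemma integral_character:
  fixes d :: "int^'s::finite"
  shows "integral (cbox 0 1) (character d) = (if d = 0 then 1 else 0)"
proof (cases "d = 0")
  case True
  then have "character d = (\<lambda>x::real^'s. 1)" by (simp add: fun_eq_iff character_def kdot_def)
  then show ?thesis
    using True by (simp add: content_cbox_if_cart interval_eq_empty_cart)
next
  case False
  then obtain j where j: "d $ j \<noteq> 0" by (auto simp: vec_eq_iff)
  define N where "N = nat \<bar>d $ j\<bar> + 1"
  have N: "N \<ge> 1" by (simp add: N_def)
  have "integral (cbox 0 1) (character d)
          = (\<Sum>a\<in>grid N. integral (cbox 0 (cell_corner N)) (\<lambda>y. character d (grid_point N a + y)))"
    by (rule integral_cube_eq_sum_cells[OF N]) (simp add: continuous_on_character integrable_continuous)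
  also have "\<dots> = (\<Sum>a\<in>grid N. character d (grid_point N a)) * integral (cbox 0 (cell_corner N)) (character d)"
    by (simp add: character_add_right sum_distrib_right)
  also have "\<dots> = 0"
    using sum_grid_character_eq_0[OF j, of N] by (simp add: N_def)
  finally show ?thesis using False by simp
qed

section \<open>Averaging against a grid-periodic kernel\<close>

lemma deviation_from_mean_le:
  fixes g :: "'n::euclidean_space \<Rightarrow> real"
  assumes g: "g integrable_on cbox a b" and ne: "box a b \<noteq> {}"
    and y: "y \<in> box a b" and osc: "\<And>z. z \<in> box a b \<Longrightarrow> \<bar>g y - g z\<bar> \<le> C"
  shows "\<bar>g y - integral (cbox a b) g / measure lborel (cbox a b)\<bar> \<le> C"
proof -
  define V where "V = measure lborel (cbox a b)"
  have V: "V > 0" using ne by (simp add: V_def content_pos_lt_eq box_ne_empty)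
  have "integral (box a b) (\<lambda>z. g y - g z) = g y * V - integral (cbox a b) g"
    using integral_diff[OF integrable_const g] by (simp add: integral_open_interval V_def)
  then have "g y - integral (cbox a b) g / V = integral (box a b) (\<lambda>z. g y - g z) / V"
    using V by (simp add: field_simps)
  moreover have "\<bar>integral (box a b) (\<lambda>z. g y - g z)\<bar> \<le> integral (box a b) (\<lambda>z. C)"
    using integrable_diff[OF integrable_const g] osc
    by (intro integral_norm_bound_integral[where f = "\<lambda>z. g y - g z", simplified real_norm_def])
       (simp_all add: integrable_on_open_interval integrable_const)
  moreover have "integral (box a b) (\<lambda>z. C) = C * V"
    by (simp add: integral_open_interval V_def)
  ultimately show ?thesis
    using V by (simp add: V_def abs_div divide_le_eq)
qed

lemma kernel_integral_deviation_le:
  fixes F K :: "'n::euclidean_space \<Rightarrow> real"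
  assumes F: "F integrable_on cbox a b" and FK: "(\<lambda>y. F y * K y) integrable_on cbox a b"
    and K: "K integrable_on cbox a b" and K_nonneg: "\<And>y. y \<in> box a b \<Longrightarrow> 0 \<le> K y"
    and K_mean: "integral (cbox a b) K = measure lborel (cbox a b)"
    and ne: "box a b \<noteq> {}"
    and osc: "\<And>y z. y \<in> box a b \<Longrightarrow> z \<in> box a b \<Longrightarrow> \<bar>F y - F z\<bar> \<le> C"
  shows "\<bar>integral (cbox a b) (\<lambda>y. F y * K y) - integral (cbox a b) F\<bar> \<le> C * measure lborel (cbox a b)"
proof -
  define M where "M = integral (cbox a b) F / measure lborel (cbox a b)"
  have "measure lborel (cbox a b) > 0" using ne by (simp add: content_pos_lt_eq box_ne_empty)
  then have "integral (cbox a b) F = M * integral (cbox a b) K"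
    by (simp add: M_def K_mean)
  then have "integral (cbox a b) (\<lambda>y. F y * K y) - integral (cbox a b) F
               = integral (box a b) (\<lambda>y. (F y - M) * K y)"
    using integral_diff[OF FK integrable_on_mult_right[OF K, of M]]
    by (simp add: integral_open_interval left_diff_distrib)
  moreover have "\<bar>integral (box a b) (\<lambda>y. (F y - M) * K y)\<bar> \<le> integral (box a b) (\<lambda>y. C * K y)"
  proof (rule integral_norm_bound_integral[where f = "\<lambda>y. (F y - M) * K y", simplified real_norm_def])
    show "(\<lambda>y. (F y - M) * K y) integrable_on box a b" "(\<lambda>y. C * K y) integrable_on box a b"
      using integrable_diff[OF FK integrable_on_mult_right[OF K, of M]] integrable_on_mult_right[OF K, of C]
      by (simp_all add: integrable_on_open_interval left_diff_distrib)
    show "\<bar>(F y - M) * K y\<bar> \<le> C * K y" if "y \<in> box a b" for y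
      using deviation_from_mean_le[OF F ne that osc[OF that]] K_nonneg[OF that]
      by (simp add: M_def abs_mult mult_right_mono)
  qed
  moreover have "integral (box a b) (\<lambda>y. C * K y) = C * measure lborel (cbox a b)"
    by (simp add: integral_open_interval K_mean)
  ultimately show ?thesis by linarith
qed

lemma integral_cube_eq_card_grid_times_cell:
  fixes K :: "real^'s::finite \<Rightarrow> 'b::banach"
  assumes L: "L \<ge> 1" and K: "K integrable_on cbox 0 1"
    and K_per: "\<And>a y. a \<in> grid L \<Longrightarrow> K (grid_point L a + y) = K y"
  shows "integral (cbox 0 1) K = of_nat (card (grid L :: ('s \<Rightarrow> nat) set)) *\<^sub>R integral (cbox 0 (cell_corner L)) K"
  using integral_cube_eq_sum_cells[OF L K] by (simp add: K_per sum_constant_scaleR)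

lemma card_grid_times_measure_cell:
  assumes "L \<ge> 1"
  shows "real (card (grid L :: ('s::finite \<Rightarrow> nat) set)) * measure lborel (cbox 0 (cell_corner L :: real^'s)) = 1"
  using integral_cube_eq_card_grid_times_cell[OF assms integrable_const[of "1::real"]]
  by (simp add: content_cbox_if_cart interval_eq_empty_cart)

lemma integral_cell_periodic_kernel:
  fixes K :: "real^'s::finite \<Rightarrow> real"
  assumes L: "L \<ge> 1" and K: "K integrable_on cbox 0 1"
    and K_per: "\<And>a y. a \<in> grid L \<Longrightarrow> K (grid_point L a + y) = K y"
    and K_int: "integral (cbox 0 1) K = 1"
  shows "integral (cbox 0 (cell_corner L)) K = measure lborel (cbox 0 (cell_corner L :: real^'s))"
  using integral_cube_eq_card_grid_times_cell[OF L K K_per] card_grid_times_measure_cell[OF L, where 's = 's]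
  by (simp add: K_int) (metis mult_cancel_left mult_zero_left zero_neq_one)

lemma cell_kernel_approximation:
  fixes f K :: "real^'s::finite \<Rightarrow> real"
  assumes L: "L \<ge> 1"
    and f: "f integrable_on cbox 0 1" and fK: "(\<lambda>x. f x * K x) integrable_on cbox 0 1"
    and K: "K integrable_on cbox 0 1" and K_nonneg: "\<And>x. 0 \<le> K x"
    and K_per: "\<And>a y. a \<in> grid L \<Longrightarrow> K (grid_point L a + y) = K y"
    and K_int: "integral (cbox 0 1) K = 1"
    and osc: "\<And>a y z. a \<in> grid L \<Longrightarrow> y \<in> box 0 (cell_corner L) \<Longrightarrow> z \<in> box 0 (cell_corner L)
                 \<Longrightarrow> \<bar>f (grid_point L a + y) - f (grid_point L a + z)\<bar> \<le> C"
  shows "\<bar>integral (cbox 0 1) (\<lambda>x. f x * K x) - integral (cbox 0 1) f\<bar> \<le> C"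
proof -
  define G where "G = (grid L :: ('s \<Rightarrow> nat) set)"
  define Q where "Q = cbox (0::real^'s) (cell_corner L)"
  define F where "F a = (\<lambda>y. f (grid_point L a + y))" for a
  have KQ: "K integrable_on Q"
    using integrable_on_cell_shifted[OF L K, of "\<lambda>_. 0"] L by (simp add: K_per Q_def mem_grid_iff)
  have ne: "box 0 (cell_corner L) \<noteq> {}"
    using L by (simp add: interval_ne_empty_cart cell_corner_def)
  have "\<bar>integral Q (\<lambda>y. F a y * K y) - integral Q (F a)\<bar> \<le> C * measure lborel Q" if a: "a \<in> G" for a
  proof -
    have "(\<lambda>y. F a y * K y) integrable_on Q"
      using integrable_on_cell_shifted[OF L fK] a by (simp add: K_per F_def G_def Q_def)
    then show ?thesis
      using kernel_integral_deviation_le[OF integrable_on_cell_shifted[OF L f] _ KQ[unfolded Q_def]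
          K_nonneg integral_cell_periodic_kernel[OF L K K_per K_int] ne osc] a
      by (simp add: F_def G_def Q_def)
  qed
  then have "(\<Sum>a\<in>G. \<bar>integral Q (\<lambda>y. F a y * K y) - integral Q (F a)\<bar>) \<le> (\<Sum>a\<in>G. C * measure lborel Q)"
    by (rule sum_mono)
  also have "\<dots> = C"
    using card_grid_times_measure_cell[OF L, where 's = 's] by (simp add: G_def Q_def)
  moreover have "integral (cbox 0 1) (\<lambda>x. f x * K x) - integral (cbox 0 1) f
                   = (\<Sum>a\<in>G. integral Q (\<lambda>y. F a y * K y) - integral Q (F a))"
    using integral_cube_eq_sum_cells[OF L fK] integral_cube_eq_sum_cells[OF L f]
    by (simp add: K_per F_def G_def Q_def sum_subtractf)
  ultimately show ?thesis
    using sum_abs[of "\<lambda>a. integral Q (\<lambda>y. F a y * K y) - integral Q (F a)" G] by linarith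
qed

lemma square_integrable_imp_absolutely_integrable:
  fixes f :: "real^'s::finite \<Rightarrow> real"
  assumes "square_integrable_on_cube f"
  shows "f absolutely_integrable_on cbox 0 1"
proof (rule measurable_bounded_by_integrable_imp_absolutely_integrable)
  show "f \<in> borel_measurable (lebesgue_on (cbox 0 1))"
    using assms by (simp add: square_integrable_on_cube_def measurable_on_iff_borel_measurable)
  show "(\<lambda>x. 1 + (f x)\<^sup>2) integrable_on cbox 0 1"
    using assms by (intro integrable_add integrable_const) (simp_all add: square_integrable_on_cube_def)
  show "norm (f x) \<le> 1 + (f x)\<^sup>2" for x
    using sum_squares_bound[of "\<bar>f x\<bar>" 1] by (simp add: power2_eq_square)
qed simp

lemma integral_of_real:
  fixes f :: "'n::euclidean_space \<Rightarrow> real"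
  assumes "f integrable_on S"
  shows "integral S (\<lambda>x. of_real (f x) :: 'b::{real_normed_vector,real_normed_algebra_1}) = of_real (integral S f)"
  using has_integral_of_real[OF integrable_integral[OF assms]] by (rule integral_unique)

lemma absolutely_integrable_times_continuous:
  fixes f :: "'n::euclidean_space \<Rightarrow> real" and \<phi> :: "'n \<Rightarrow> 'c::{euclidean_space,real_normed_field}"
  assumes f: "f absolutely_integrable_on cbox a b" and \<phi>: "continuous_on (cbox a b) \<phi>"
  shows "(\<lambda>x. of_real (f x) * \<phi> x) integrable_on cbox a b"
proof -
  have "(\<lambda>x. f x *\<^sub>R (1::'c)) absolutely_integrable_on cbox a b"
    using f by (rule absolutely_integrable_scaleR_right)
  then have "(\<lambda>x. \<phi> x * of_real (f x)) absolutely_integrable_on cbox a b"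
    using \<phi> by (intro absolutely_integrable_bounded_measurable_product[OF bilinear_times])
      (auto simp: of_real_def continuous_imp_measurable_on_sets_lebesgue
        compact_continuous_image compact_imp_bounded)
  then show ?thesis
    by (simp add: mult.commute set_lebesgue_integral_eq_integral(1))
qed

section \<open>The Fejer kernel\<close>

definition index_cube :: "nat \<Rightarrow> (int^'s::finite) set" where
  "index_cube n = {m. \<forall>j. 0 \<le> m $ j \<and> m $ j \<le> int n}"

definition fejer_kernel :: "nat \<Rightarrow> nat \<Rightarrow> real^'s::finite \<Rightarrow> real" where
  "fejer_kernel L n x = (cmod (\<Sum>m\<in>index_cube n. character (int L *s m) x))\<^sup>2
                          / real (card (index_cube n :: (int^'s) set))"

definition fejer_weight :: "nat \<Rightarrow> int^'s::finite \<Rightarrow> real" where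
  "fejer_weight n k = (\<Prod>j\<in>UNIV. max 0 (1 - real_of_int \<bar>k $ j\<bar> / (real n + 1)))"

lemma vecs_in_Pi_eq_image_PiE: "{x :: 'a^'n. \<forall>i. x $ i \<in> A i} = vec_lambda ` PiE UNIV A"
proof
  show "{x :: 'a^'n. \<forall>i. x $ i \<in> A i} \<subseteq> vec_lambda ` PiE UNIV A"
  proof
    fix x :: "'a^'n" assume "x \<in> {x. \<forall>i. x $ i \<in> A i}"
    then have "vec_nth x \<in> PiE UNIV A" by (simp add: PiE_iff)
    then show "x \<in> vec_lambda ` PiE UNIV A" by (metis image_eqI vec_nth_inverse)
  qed
qed auto

lemma card_vecs_in_Pi:
  "card {x :: 'a^'n::finite. \<forall>i. x $ i \<in> A i} = (\<Prod>i\<in>UNIV. card (A i))"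
  unfolding vecs_in_Pi_eq_image_PiE
  by (simp add: card_image inj_on_def vec_lambda_inject card_PiE)

lemma finite_index_cube: "finite (index_cube n :: (int^'s::finite) set)"
proof -
  have "finite (vec_lambda ` PiE UNIV (\<lambda>_::'s. {0..int n}))" by (simp add: finite_PiE)
  then show ?thesis
    by (simp add: index_cube_def flip: vecs_in_Pi_eq_image_PiE[of "\<lambda>_. {0..int n}"])
qed

lemma card_index_cube: "card (index_cube n :: (int^'s::finite) set) = (n + 1) ^ CARD('s)"
proof -
  have "nat (int n + 1) = n + 1" by (simp add: nat_eq_iff)
  then show ?thesis
    using card_vecs_in_Pi[of "\<lambda>_::'s. {0..int n}"] by (simp add: index_cube_def)
qed

lemma card_index_cube_pos: "card (index_cube n) > 0"
  by (simp add: card_index_cube)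

lemma int_smult_eq_iff: "L \<ge> 1 \<Longrightarrow> int L *s m = int L *s m' \<longleftrightarrow> m = m'"
  by (auto simp: vec_eq_iff)

lemma fejer_kernel_expansion:
  fixes x :: "real^'s::finite"
  shows "complex_of_real (fejer_kernel L n x)
     = of_real (1 / real (card (index_cube n :: (int^'s) set)))
         * (\<Sum>m\<in>index_cube n. \<Sum>m'\<in>index_cube n. character (int L *s m - int L *s m') x)"
proof -
  have "complex_of_real ((cmod (\<Sum>m\<in>index_cube n. character (int L *s m) x))\<^sup>2)
          = (\<Sum>m\<in>index_cube n. character (int L *s m) x) * cnj (\<Sum>m\<in>index_cube n. character (int L *s m) x)"
    by (rule complex_norm_square)
  also have "\<dots> = (\<Sum>m\<in>index_cube n. \<Sum>m'\<in>index_cube n. character (int L *s m - int L *s m') x)"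
    by (simp add: sum_product character_diff_left)
  finally show ?thesis
    unfolding fejer_kernel_def by (simp add: divide_inverse mult.commute)
qed

lemma fejer_kernel_nonneg: "fejer_kernel L n x \<ge> 0"
  by (simp add: fejer_kernel_def)

lemma continuous_on_fejer_kernel: "continuous_on S (fejer_kernel L n)"
  unfolding fejer_kernel_def
  by (intro continuous_intros continuous_on_character) (use card_index_cube_pos in auto)

lemma fejer_kernel_grid_periodic:
  assumes "L \<ge> 1"
  shows "fejer_kernel L n (grid_point L a + y) = fejer_kernel L n y"
proof -
  have "character (int L *s m) (grid_point L a) = 1" for m
  proof -
    have "kdot (int L *s m) (grid_point L a) = of_int (\<Sum>j\<in>UNIV. m $ j * int (a j))"
      using assms by (simp add: kdot_def grid_point_def)
    then show ?thesis unfolding character_eq_1_iff by (simp only: Ints_of_int)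
  qed
  then show ?thesis by (simp add: fejer_kernel_def character_add_right)
qed

lemma integral_fejer_kernel:
  assumes L: "L \<ge> 1"
  shows "integral (cbox 0 1) (fejer_kernel L n :: real^'s::finite \<Rightarrow> real) = 1"
proof -
  define M where "M = (index_cube n :: (int^'s) set)"
  have "complex_of_real (integral (cbox 0 1) (fejer_kernel L n :: real^'s \<Rightarrow> real))
          = integral (cbox 0 1) (\<lambda>x::real^'s. complex_of_real (fejer_kernel L n x))"
    by (simp add: integral_of_real integrable_continuous continuous_on_fejer_kernel)
  also have "\<dots> = of_real (1 / real (card M)) *
      (\<Sum>m\<in>M. \<Sum>m'\<in>M. integral (cbox 0 1) (character (int L *s m - int L *s m') :: real^'s \<Rightarrow> complex))"
    unfolding fejer_kernel_expansion M_def
    by (simp add: integral_sum finite_index_cube integrable_continuous continuous_on_character integrable_sum)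
  also have "\<dots> = of_real (1 / real (card M)) * (\<Sum>m\<in>M. \<Sum>m'\<in>M. if m = m' then 1 else 0)"
    by (simp add: integral_character int_smult_eq_iff[OF L])
  also have "\<dots> = 1"
    using card_index_cube_pos[where 'a = 's] finite_index_cube[where 's = 's]
    by (simp add: M_def sum.delta sum.delta' card_gt_0_iff)
  finally show ?thesis by (metis of_real_eq_1_iff)
qed

lemma sum_sum_diff_eq_sum_card:
  fixes M :: "'a::ab_group_add set" and h :: "'a \<Rightarrow> 'b::comm_semiring_1"
  assumes M: "finite M"
  defines "D \<equiv> (\<lambda>(m, m'). m' - m) ` (M \<times> M)"
  shows "(\<Sum>m\<in>M. \<Sum>m'\<in>M. h (m' - m)) = (\<Sum>k\<in>D. of_nat (card {m\<in>M. m + k \<in> M}) * h k)"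
proof -
  have D: "finite D" using M by (simp add: D_def)
  have "(\<Sum>m'\<in>M. h (m' - m)) = (\<Sum>k\<in>D. if m + k \<in> M then h k else 0)" if m: "m \<in> M" for m
  proof -
    have "(\<Sum>m'\<in>M. h (m' - m)) = (\<Sum>k\<in>{k\<in>D. m + k \<in> M}. h k)"
      by (rule sum.reindex_bij_witness[where i = "\<lambda>k. m + k" and j = "\<lambda>m'. m' - m"])
         (use m in \<open>auto simp: D_def\<close>)
    also have "\<dots> = (\<Sum>k\<in>D. if m + k \<in> M then h k else 0)"
      by (rule sum.inter_filter[OF D])
    finally show ?thesis .
  qed
  then have "(\<Sum>m\<in>M. \<Sum>m'\<in>M. h (m' - m)) = (\<Sum>m\<in>M. \<Sum>k\<in>D. if m + k \<in> M then h k else 0)"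
    by (rule sum.cong[OF refl])
  also have "\<dots> = (\<Sum>k\<in>D. \<Sum>m\<in>M. if m + k \<in> M then h k else 0)"
    by (rule sum.swap)
  also have "\<dots> = (\<Sum>k\<in>D. of_nat (card {m\<in>M. m + k \<in> M}) * h k)"
    by (simp add: sum.inter_filter[OF M, symmetric])
  finally show ?thesis .
qed

lemma card_index_cube_overlap:
  fixes k :: "int^'s::finite"
  shows "real (card {m \<in> index_cube n. m + k \<in> index_cube n})
     = fejer_weight n k * real (card (index_cube n :: (int^'s) set))"
proof -
  have "m \<in> index_cube n \<and> m + k \<in> index_cube n \<longleftrightarrow> (\<forall>j. m $ j \<in> {max 0 (- k $ j)..min (int n) (int n - k $ j)})"
    for m :: "int^'s"
    unfolding index_cube_def mem_Collect_eq all_conj_distrib[symmetric] by (intro iff_allI) auto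
  then have "{m \<in> index_cube n. m + k \<in> index_cube n} = {m. \<forall>j. m $ j \<in> {max 0 (- k $ j)..min (int n) (int n - k $ j)}}"
    by blast
  then have "card {m \<in> index_cube n. m + k \<in> index_cube n}
               = (\<Prod>j\<in>UNIV. card {max 0 (- k $ j)..min (int n) (int n - k $ j)})"
    by (simp only: card_vecs_in_Pi)
  also have "\<dots> = (\<Prod>j\<in>UNIV. nat (int n + 1 - \<bar>k $ j\<bar>))"
    by (intro prod.cong refl) (simp add: min_def max_def abs_if algebra_simps)
  finally have "card {m \<in> index_cube n. m + k \<in> index_cube n} = (\<Prod>j\<in>UNIV. nat (int n + 1 - \<bar>k $ j\<bar>))" .
  moreover have "real (nat (int n + 1 - \<bar>d\<bar>)) = max 0 (1 - real_of_int \<bar>d\<bar> / (real n + 1)) * (real n + 1)" for d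
  proof (cases "\<bar>d\<bar> \<le> int n + 1")
    case True
    then have "real_of_int \<bar>d\<bar> / (real n + 1) \<le> 1" by (simp add: divide_le_eq_1)
    with True show ?thesis by (simp add: of_nat_nat field_simps)
  next
    case False
    then have "real_of_int \<bar>d\<bar> / (real n + 1) > 1" by (simp add: less_divide_eq_1)
    with False show ?thesis by simp
  qed
  ultimately show ?thesis
    by (simp add: fejer_weight_def card_index_cube prod.distrib add.commute)
qed

lemma fejer_weight_nonneg: "fejer_weight n k \<ge> 0"
  by (simp add: fejer_weight_def prod_nonneg)

lemma fejer_weight_le_1: "fejer_weight n k \<le> 1"
  unfolding fejer_weight_def by (rule prod_le_1) auto

lemma tendsto_fejer_weight: "(\<lambda>n. fejer_weight n k) \<longlonglongrightarrow> 1"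
proof -
  have "(\<lambda>n. real_of_int \<bar>k $ j\<bar> / (real n + 1)) \<longlonglongrightarrow> 0" for j
    using tendsto_mult[OF tendsto_const LIMSEQ_inverse_real_of_nat, of "real_of_int \<bar>k $ j\<bar>"]
    by (simp add: divide_inverse add.commute)
  then have "(\<lambda>n. fejer_weight n k) \<longlonglongrightarrow> (\<Prod>j\<in>(UNIV::'a set). max 0 (1 - 0))"
    unfolding fejer_weight_def by (intro tendsto_prod tendsto_max tendsto_const tendsto_diff)
  then show ?thesis by simp
qed

lemma fejer_double_sum_eq_infsum:
  fixes h :: "int^'s::finite \<Rightarrow> complex"
  shows "of_real (1 / real (card (index_cube n :: (int^'s) set)))
           * (\<Sum>m\<in>index_cube n. \<Sum>m'\<in>index_cube n. h (m' - m))
         = (\<Sum>\<^sub>\<infinity>k. of_real (fejer_weight n k) * h k)"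
proof -
  define M where "M = (index_cube n :: (int^'s) set)"
  define D where "D = (\<lambda>(m, m'). m' - m) ` (M \<times> M)"
  have M: "finite M" "card M > 0" by (simp_all add: M_def finite_index_cube card_index_cube_pos)
  have weight: "fejer_weight n k = real (card {m\<in>M. m + k \<in> M}) / real (card M)" for k
    using card_index_cube_overlap[of n k, folded M_def] M(2) by simp
  have "of_real (1 / real (card M)) * (\<Sum>m\<in>M. \<Sum>m'\<in>M. h (m' - m))
          = of_real (1 / real (card M)) * (\<Sum>k\<in>D. of_nat (card {m\<in>M. m + k \<in> M}) * h k)"
    by (simp add: sum_sum_diff_eq_sum_card[OF M(1)] D_def)
  also have "\<dots> = (\<Sum>k\<in>D. of_real (fejer_weight n k) * h k)"
    by (simp add: weight sum_distrib_left)
  also have "\<dots> = (\<Sum>\<^sub>\<infinity>k. of_real (fejer_weight n k) * h k)"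
  proof -
    have "fejer_weight n k = 0" if "k \<notin> D" for k
    proof -
      have "m + k \<notin> M" if "m \<in> M" for m
        using \<open>k \<notin> D\<close> that unfolding D_def by (auto intro: image_eqI[where x = "(m, m + k)"])
      then have "{m\<in>M. m + k \<in> M} = {}" by blast
      then show ?thesis by (simp only: weight card.empty of_nat_0 div_0)
    qed
    then show ?thesis
      using M(1) by (subst infsum_cong_neutral[where T = D]) (auto simp: D_def)
  qed
  finally show ?thesis by (simp add: M_def)
qed

lemma integral_times_fejer_kernel:
  fixes f :: "real^'s::finite \<Rightarrow> real"
  assumes f: "f absolutely_integrable_on cbox 0 1"
  shows "complex_of_real (integral (cbox 0 1) (\<lambda>x. f x * fejer_kernel L n x))
           = (\<Sum>\<^sub>\<infinity>k. of_real (fejer_weight n k) * fourier_coeff f (int L *s k))"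
proof -
  define M where "M = (index_cube n :: (int^'s) set)"
  have M: "finite M" by (simp add: M_def finite_index_cube)
  have fK: "(\<lambda>x. f x * fejer_kernel L n x) integrable_on cbox 0 1"
    using absolutely_integrable_times_continuous[OF f continuous_on_fejer_kernel] by simp
  have f_char: "(\<lambda>x. complex_of_real (f x) * character k x) integrable_on cbox 0 1" for k
    by (rule absolutely_integrable_times_continuous[OF f continuous_on_character])
  have "complex_of_real (integral (cbox 0 1) (\<lambda>x. f x * fejer_kernel L n x))
          = integral (cbox 0 1) (\<lambda>x. of_real (1 / real (card M)) *
              (\<Sum>m\<in>M. \<Sum>m'\<in>M. complex_of_real (f x) * character (int L *s m - int L *s m') x))"
    unfolding integral_of_real[OF fK, symmetric]
    by (rule integral_cong) (simp add: fejer_kernel_expansion M_def sum_distrib_left mult.left_commute)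
  also have "\<dots> = of_real (1 / real (card M)) * (\<Sum>m\<in>M. \<Sum>m'\<in>M.
                        integral (cbox 0 1) (\<lambda>x. complex_of_real (f x) * character (int L *s m - int L *s m') x))"
    by (simp only: integral_mult_right integral_sum[OF M] integrable_sum[OF M] f_char)
  also have "\<dots> = of_real (1 / real (card M)) * (\<Sum>m\<in>M. \<Sum>m'\<in>M. fourier_coeff f (int L *s (m' - m)))"
    by (simp add: fourier_coeff_eq_integral_character vector_ssub_ldistrib)
  also have "\<dots> = (\<Sum>\<^sub>\<infinity>k. of_real (fejer_weight n k) * fourier_coeff f (int L *s k))"
    unfolding M_def by (rule fejer_double_sum_eq_infsum)
  finally show ?thesis .
qed

lemma infsum_split_finite:
  fixes g :: "'k \<Rightarrow> 'b::{uniform_topological_group_add, topological_comm_monoid_add, ab_group_add,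
                                complete_uniform_space, t2_space}"
  assumes "g summable_on UNIV" and "finite F"
  shows "(\<Sum>\<^sub>\<infinity>k. g k) = (\<Sum>k\<in>F. g k) + (\<Sum>\<^sub>\<infinity>k\<in>- F. g k)"
proof -
  have "(\<Sum>\<^sub>\<infinity>k. g k) = (\<Sum>\<^sub>\<infinity>k\<in>F \<union> - F. g k)" by simp
  also have "\<dots> = (\<Sum>\<^sub>\<infinity>k\<in>F. g k) + (\<Sum>\<^sub>\<infinity>k\<in>- F. g k)"
    using assms(2) summable_on_subset[OF assms(1)] by (intro infsum_Un_disjoint) auto
  finally show ?thesis using assms(2) by simp
qed

lemma norm_infsum_weighted_minus_infsum_le:
  fixes a :: "'k \<Rightarrow> complex" and w :: "'k \<Rightarrow> real"
  assumes a: "(\<lambda>k. norm (a k)) summable_on UNIV"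
    and w: "\<And>k. 0 \<le> w k" "\<And>k. w k \<le> 1" and F: "finite F"
  shows "norm ((\<Sum>\<^sub>\<infinity>k. of_real (w k) * a k) - (\<Sum>\<^sub>\<infinity>k. a k))
           \<le> (\<Sum>k\<in>F. (1 - w k) * norm (a k)) + (\<Sum>\<^sub>\<infinity>k\<in>- F. norm (a k))"
proof -
  define g where "g k = (1 - w k) * norm (a k)" for k
  have g_le: "g k \<le> norm (a k)" for k
    using w[of k] by (simp add: g_def mult_left_le_one_le)
  have g_nonneg: "0 \<le> g k" for k
    using w(2)[of k] by (simp add: g_def)
  have g: "g summable_on UNIV"
    using g_le g_nonneg by (intro summable_on_comparison_test[OF a]) auto
  have wa: "(\<lambda>k. of_real (w k) * a k) summable_on UNIV"
    by (rule abs_summable_summable, rule summable_on_comparison_test[OF a])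
       (use w in \<open>auto simp: norm_mult mult_left_le_one_le\<close>)
  have "((\<lambda>k. of_real (w k) * a k + - a k) has_sum ((\<Sum>\<^sub>\<infinity>k. of_real (w k) * a k) + - (\<Sum>\<^sub>\<infinity>k. a k))) UNIV"
    by (intro has_sum_add has_sum_infsum wa) (simp add: has_sum_uminus abs_summable_summable[OF a])
  then have "norm ((\<Sum>\<^sub>\<infinity>k. of_real (w k) * a k) + - (\<Sum>\<^sub>\<infinity>k. a k)) \<le> (\<Sum>\<^sub>\<infinity>k. g k)"
  proof (rule norm_infsum_le[OF _ has_sum_infsum[OF g]])
    fix k
    have "of_real (w k) * a k + - a k = - (of_real (1 - w k) * a k)" by (simp add: algebra_simps)
    then show "norm (of_real (w k) * a k + - a k) \<le> g k"
      using w(2)[of k] by (simp only: norm_minus_cancel norm_mult norm_of_real g_def)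
  qed
  also have "\<dots> \<le> (\<Sum>k\<in>F. g k) + (\<Sum>\<^sub>\<infinity>k\<in>- F. norm (a k))"
    using infsum_mono[OF summable_on_subset[OF g] summable_on_subset[OF a] g_le]
    by (simp add: infsum_split_finite[OF g F])
  finally show ?thesis by (simp add: g_def)
qed

lemma tendsto_infsum_weighted:
  fixes a :: "'k \<Rightarrow> complex" and w :: "nat \<Rightarrow> 'k \<Rightarrow> real"
  assumes a: "(\<lambda>k. norm (a k)) summable_on UNIV"
    and w: "\<And>n k. 0 \<le> w n k" "\<And>n k. w n k \<le> 1"
    and lim: "\<And>k. (\<lambda>n. w n k) \<longlonglongrightarrow> 1"
  shows "(\<lambda>n. \<Sum>\<^sub>\<infinity>k. of_real (w n k) * a k) \<longlonglongrightarrow> (\<Sum>\<^sub>\<infinity>k. a k)"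
proof (rule LIMSEQ_I)
  fix r :: real assume r: "r > 0"
  obtain F where F: "finite F" and "dist (\<Sum>k\<in>F. norm (a k)) (\<Sum>\<^sub>\<infinity>k. norm (a k)) \<le> r / 3"
    using infsum_finite_approximation[OF a, of "r / 3"] r by auto
  then have tail: "(\<Sum>\<^sub>\<infinity>k\<in>- F. norm (a k)) \<le> r / 3"
    by (simp add: infsum_split_finite[OF a F] dist_real_def)
  have "(\<lambda>n. \<Sum>k\<in>F. (1 - w n k) * norm (a k)) \<longlonglongrightarrow> (\<Sum>k\<in>F. (1 - 1) * norm (a k))"
    by (intro tendsto_sum tendsto_mult tendsto_diff tendsto_const lim)
  then have "eventually (\<lambda>n. (\<Sum>k\<in>F. (1 - w n k) * norm (a k)) < r / 3) sequentially"
    using r by (intro order_tendstoD(2)) auto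
  then obtain n0 where n0: "\<And>n. n \<ge> n0 \<Longrightarrow> (\<Sum>k\<in>F. (1 - w n k) * norm (a k)) < r / 3"
    by (auto simp: eventually_sequentially)
  show "\<exists>n0. \<forall>n\<ge>n0. norm ((\<Sum>\<^sub>\<infinity>k. of_real (w n k) * a k) - (\<Sum>\<^sub>\<infinity>k. a k)) < r"
  proof (intro exI allI impI)
    fix n assume "n0 \<le> n"
    have "norm ((\<Sum>\<^sub>\<infinity>k. of_real (w n k) * a k) - (\<Sum>\<^sub>\<infinity>k. a k))
            \<le> (\<Sum>k\<in>F. (1 - w n k) * norm (a k)) + (\<Sum>\<^sub>\<infinity>k\<in>- F. norm (a k))"
      by (rule norm_infsum_weighted_minus_infsum_le[OF a _ _ F]) (simp_all add: w)
    then show "norm ((\<Sum>\<^sub>\<infinity>k. of_real (w n k) * a k) - (\<Sum>\<^sub>\<infinity>k. a k)) < r"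
      using n0[OF \<open>n0 \<le> n\<close>] tail r by linarith
  qed
qed

section \<open>Hoelder estimates\<close>

lemma lp_norm_pos:
  fixes h :: "real^'s::finite"
  assumes "h \<noteq> 0"
  shows "lp_norm p h > 0"
proof -
  obtain j where j: "h $ j \<noteq> 0" using assms by (auto simp: vec_eq_iff)
  show ?thesis
  proof (cases "p = \<infinity>")
    case True
    have "\<bar>h $ j\<bar> \<le> Max (range (\<lambda>j. \<bar>h $ j\<bar>))" by (rule Max_ge) auto
    moreover have "0 < \<bar>h $ j\<bar>" using j by simp
    ultimately have "0 < Max (range (\<lambda>j. \<bar>h $ j\<bar>))" by linarith
    then show ?thesis using True by (simp add: lp_norm_def)
  next
    case False
    have "\<bar>h $ j\<bar> powr real_of_ereal p \<le> (\<Sum>j\<in>UNIV. \<bar>h $ j\<bar> powr real_of_ereal p)"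
      by (rule member_le_sum) auto
    moreover have "\<bar>h $ j\<bar> powr real_of_ereal p > 0" using j by simp
    ultimately have "(\<Sum>j\<in>UNIV. \<bar>h $ j\<bar> powr real_of_ereal p) > 0" by linarith
    then show ?thesis using False by (simp add: lp_norm_def)
  qed
qed

lemma lp_norm_powr_le:
  fixes h :: "real^'s::finite"
  assumes p: "1 \<le> p" and h: "\<And>j. \<bar>h $ j\<bar> \<le> r" and \<alpha>: "0 < \<alpha>"
  shows "lp_norm p h powr \<alpha> \<le> dim_factor \<alpha> p TYPE('s) * r powr \<alpha>"
proof (cases "p = \<infinity>")
  case True
  have "\<bar>h $ j\<bar> \<le> lp_norm p h" for j
    using True by (simp add: lp_norm_def)
  then have "0 \<le> lp_norm p h" by (meson abs_ge_zero order_trans)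
  moreover have "lp_norm p h \<le> r" using True h by (simp add: lp_norm_def)
  ultimately show ?thesis
    using True \<alpha> by (simp add: dim_factor_def powr_mono2)
next
  case False
  then obtain P where P: "p = ereal P" "P \<ge> 1" using p by (cases p) auto
  define s where "s = real CARD('s)"
  have r: "0 \<le> r" using h by (meson abs_ge_zero order_trans)
  have "(\<Sum>j\<in>UNIV. \<bar>h $ j\<bar> powr P) \<le> s * r powr P"
    using sum_mono[of UNIV "\<lambda>j. \<bar>h $ j\<bar> powr P" "\<lambda>_. r powr P"] h P(2)
    by (simp add: s_def powr_mono2)
  then have "lp_norm p h \<le> (s * r powr P) powr (1 / P)"
    using P by (simp add: lp_norm_def powr_mono2 sum_nonneg)
  also have "\<dots> = s powr (1 / P) * r"
    using P(2) r by (simp add: s_def powr_mult powr_powr)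
  finally have "lp_norm p h powr \<alpha> \<le> (s powr (1 / P) * r) powr \<alpha>"
    using P \<alpha> by (intro powr_mono2) (auto simp: lp_norm_def)
  also have "\<dots> = dim_factor \<alpha> p TYPE('s) * r powr \<alpha>"
    using P r by (simp add: dim_factor_def s_def powr_mult powr_powr)
  finally show ?thesis .
qed

lemma holder_seminorm_nonneg:
  assumes "bdd_above (holder_quotients \<alpha> p (f :: real^'s::finite \<Rightarrow> real))"
  shows "holder_seminorm \<alpha> p f \<ge> 0"
proof -
  define h :: "real^'s" where "h = (\<chi> j. 1 / 2)"
  have "\<bar>f (0 + h) - f 0\<bar> / lp_norm p h powr \<alpha> \<in> holder_quotients \<alpha> p f"
    unfolding holder_quotients_def
    by (rule CollectI, rule exI[of _ 0], rule exI[of _ h]) (auto simp: h_def halfopen_cube_def vec_eq_iff)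
  then show ?thesis
    unfolding holder_seminorm_def by (rule cSup_upper2[OF _ _ assms]) simp
qed

lemma holder_seminorm_bound:
  assumes bdd: "bdd_above (holder_quotients \<alpha> p f)"
    and "h \<noteq> 0" and "x \<in> halfopen_cube" and "x + h \<in> halfopen_cube"
  shows "\<bar>f (x + h) - f x\<bar> \<le> holder_seminorm \<alpha> p f * lp_norm p h powr \<alpha>"
proof -
  have "\<bar>f (x + h) - f x\<bar> / lp_norm p h powr \<alpha> \<in> holder_quotients \<alpha> p f"
    using assms unfolding holder_quotients_def by blast
  then have "\<bar>f (x + h) - f x\<bar> / lp_norm p h powr \<alpha> \<le> holder_seminorm \<alpha> p f"
    unfolding holder_seminorm_def using bdd by (rule cSup_upper)
  then show ?thesis
    using lp_norm_pos[OF \<open>h \<noteq> 0\<close>, of p] by (simp add: divide_le_eq)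
qed

lemma grid_point_plus_box_in_halfopen_cube:
  assumes "a \<in> grid L" and "y \<in> box 0 (cell_corner L)"
  shows "grid_point L a + y \<in> halfopen_cube"
proof -
  have "(real (a j) + 1) / real L \<le> 1" "0 < y $ j" "y $ j < 1 / real L" for j
  proof -
    have "a j + 1 \<le> L" using assms(1) by (simp add: mem_grid_iff Suc_le_eq)
    then show "(real (a j) + 1) / real L \<le> 1" by (simp add: divide_le_eq_1)
    show "0 < y $ j" "y $ j < 1 / real L" using assms(2) by (auto simp: mem_box_cart cell_corner_def)
  qed
  then have "0 \<le> real (a j) / real L + y $ j \<and> real (a j) / real L + y $ j < 1" for j
    by (smt (verit) add_divide_distrib divide_nonneg_nonneg of_nat_0_le_iff)
  then show ?thesis by (simp add: halfopen_cube_def grid_point_def)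
qed

lemma holder_cell_oscillation:
  fixes f :: "real^'s::finite \<Rightarrow> real"
  assumes \<alpha>: "0 < \<alpha>" and p: "1 \<le> p" and bdd: "bdd_above (holder_quotients \<alpha> p f)"
    and a: "a \<in> grid L" and y: "y \<in> box 0 (cell_corner L)" and z: "z \<in> box 0 (cell_corner L)"
  shows "\<bar>f (grid_point L a + y) - f (grid_point L a + z)\<bar>
           \<le> dim_factor \<alpha> p TYPE('s) / real L powr \<alpha> * holder_seminorm \<alpha> p f"
proof (cases "y = z")
  case True
  then show ?thesis
    using holder_seminorm_nonneg[OF bdd] by (simp add: dim_factor_def)
next
  case False
  have "\<bar>(y - z) $ j\<bar> \<le> 1 / real L" for j
  proof -
    have "0 < y $ j" "y $ j < 1 / real L" "0 < z $ j" "z $ j < 1 / real L"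
      using y z by (auto simp: mem_box_cart cell_corner_def)
    then show ?thesis by (simp add: abs_le_iff)
  qed
  then have "lp_norm p (y - z) powr \<alpha> \<le> dim_factor \<alpha> p TYPE('s) * (1 / real L) powr \<alpha>"
    by (rule lp_norm_powr_le[OF p _ \<alpha>])
  moreover have "\<bar>f (grid_point L a + y) - f (grid_point L a + z)\<bar>
                   \<le> holder_seminorm \<alpha> p f * lp_norm p (y - z) powr \<alpha>"
    using holder_seminorm_bound[OF bdd, of "y - z" "grid_point L a + z"] False
      grid_point_plus_box_in_halfopen_cube[OF a] y z by (simp add: algebra_simps)
  moreover have "(1 / real L) powr \<alpha> = 1 / real L powr \<alpha>"
    by (simp add: powr_divide)
  ultimately show ?thesis
    using mult_left_mono[OF _ holder_seminorm_nonneg[OF bdd]] by (fastforce simp: mult.commute)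
qed

lemma norm_fejer_mean_minus_mean_le:
  fixes f :: "real^'s::finite \<Rightarrow> real"
  assumes \<alpha>: "0 < \<alpha>" and p: "1 \<le> p" and L: "L \<ge> 1"
    and f: "f absolutely_integrable_on cbox 0 1" and bdd: "bdd_above (holder_quotients \<alpha> p f)"
  shows "norm ((\<Sum>\<^sub>\<infinity>k. of_real (fejer_weight n k) * fourier_coeff f (int L *s k)) - fourier_coeff f 0)
           \<le> dim_factor \<alpha> p TYPE('s) / real L powr \<alpha> * holder_seminorm \<alpha> p f"
proof -
  have f_int: "f integrable_on cbox 0 1"
    using f set_lebesgue_integral_eq_integral(1) by blast
  have "fourier_coeff f 0 = of_real (integral (cbox 0 1) f)"
    using integral_of_real[OF f_int] by (simp add: fourier_coeff_eq_integral_character character_def kdot_def)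
  moreover have "\<bar>integral (cbox 0 1) (\<lambda>x. f x * fejer_kernel L n x) - integral (cbox 0 1) f\<bar>
                   \<le> dim_factor \<alpha> p TYPE('s) / real L powr \<alpha> * holder_seminorm \<alpha> p f"
    using absolutely_integrable_times_continuous[OF f continuous_on_fejer_kernel]
    by (intro cell_kernel_approximation[OF L f_int _ integrable_continuous fejer_kernel_nonneg
          fejer_kernel_grid_periodic[OF L] integral_fejer_kernel[OF L] holder_cell_oscillation[OF \<alpha> p bdd]])
       (auto intro: continuous_on_fejer_kernel)
  ultimately show ?thesis
    by (simp flip: integral_times_fejer_kernel[OF f] of_real_diff)
qed

theorem mainTheorem1:
  fixes f :: "real ^ 's \<Rightarrow> real" and \<alpha> :: real and p :: ereal and L :: nat
  assumes "0 < \<alpha>" "\<alpha> \<le> 1" "1 \<le> p"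
    and "f \<in> K_space \<alpha> p"
    and "L \<ge> 1"
  shows "norm (\<Sum>\<^sub>\<infinity>k\<in>UNIV - {0}. fourier_coeff f (\<chi> j. int L * k $ j))
           \<le> dim_factor \<alpha> p TYPE('s) / real L powr \<alpha> * holder_seminorm \<alpha> p f"
proof -
  define c where "c k = fourier_coeff f (int L *s k)" for k :: "int^'s"
  have f: "f absolutely_integrable_on cbox 0 1"
    and summable: "(\<lambda>k. norm (fourier_coeff f k)) summable_on UNIV"
    and bdd: "bdd_above (holder_quotients \<alpha> p f)"
    using assms(4) square_integrable_imp_absolutely_integrable by (auto simp: K_space_def)
  have "inj ((*s) (int L) :: int^'s \<Rightarrow> int^'s)"
    using assms(5) by (intro injI) (simp add: int_smult_eq_iff)
  then have c: "(\<lambda>k. norm (c k)) summable_on UNIV"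
    using summable_on_subset[OF summable, of "range ((*s) (int L))"]
    by (simp add: c_def summable_on_reindex o_def)
  have "(\<lambda>n. \<Sum>\<^sub>\<infinity>k. of_real (fejer_weight n k) * c k) \<longlonglongrightarrow> (\<Sum>\<^sub>\<infinity>k. c k)"
    by (rule tendsto_infsum_weighted[OF c fejer_weight_nonneg fejer_weight_le_1 tendsto_fejer_weight])
  then have "norm ((\<Sum>\<^sub>\<infinity>k. c k) - c 0) \<le> dim_factor \<alpha> p TYPE('s) / real L powr \<alpha> * holder_seminorm \<alpha> p f"
    using norm_fejer_mean_minus_mean_le[OF assms(1,3,5) f bdd]
    by (intro tendsto_upperbound[OF tendsto_norm[OF tendsto_diff]]) (auto simp: c_def)
  moreover have "(\<Sum>\<^sub>\<infinity>k. c k) = c 0 + (\<Sum>\<^sub>\<infinity>k\<in>UNIV - {0}. c k)"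
    using infsum_split_finite[OF abs_summable_summable[OF c], of "{0}"] by (simp add: Compl_eq_Diff_UNIV)
  ultimately show ?thesis by (simp add: c_def vector_scalar_mult_def)
qed

end
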